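(* Fix an integer $g \ge 0$. For any $0 < c_1 < 1$ and $c_2 > 1$ we have $$p^{c_1/p} < r_{(g,p)} < p^{c_2/p} \quad \text{for all sufficiently large } p.$$ In particular $\displaystyle\lim_{p \to \infty} \frac{p \log r_{(g,p)}}{\log p} = 1$.
   Context: For nonnegative integers $g,p$ let $$B_{(g,p)}(t) = t^{2p+1}(t^{2g+1}-1) + 1 - 2t^{p+g+1} - t^{2g+1},$$ and let $r_{(g,p)}$ be the unique real root of $B_{(g,p)}(t)$ greater than $1$. *)

theory Defs
  imports "HOL-Analysis.Analysis"
begin

definition B_poly :: "nat \<Rightarrow> nat \<Rightarrow> real \<Rightarrow> real" where
  "B_poly g p t = t^(2*p+1) * (t^(2*g+1) - 1) + 1 - 2 * t^(p+g+1) - t^(2*g+1)"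

text \<open>The unique real root of B_(g,p) greater than 1 (uniqueness is asserted in the paper).\<close>
definition r_root :: "nat \<Rightarrow> nat \<Rightarrow> real" where
  "r_root g p = (THE t. t > 1 \<and> B_poly g p t = 0)"

end

theory Submission
  imports Defs
begin

text \<open>
  With \<open>t = e\<^sup>s\<close>, \<open>a = 2g + 1\<close>, \<open>n = 2p + 1\<close> and \<open>a + n = 2(p + g + 1)\<close> one has
  \<open>B(e\<^sup>s) = 4 e\<^bsup>(p+g+1)s\<^esup> (sinh(as/2) sinh(ns/2) - 1/2)\<close>.
  The product of sinhs increases strictly from \<open>0\<close> on \<open>s \<ge> 0\<close>, so \<open>r = e\<^sup>s\<close> for the unique
  \<open>s > 0\<close> where it equals \<open>1/2\<close>, and bounds on \<open>r\<close> follow from its value at \<open>s = c log p / p\<close>.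
  There \<open>sinh(as/2) \<approx> ac log p / (2p)\<close> and \<open>sinh(ns/2) \<approx> p\<^sup>c / 2\<close>, so the product behaves
  like \<open>ac log p / (4 p\<^bsup>1-c\<^esup>)\<close>: it tends to \<open>0\<close> for \<open>c < 1\<close> and to \<open>\<infinity>\<close> for \<open>c > 1\<close>.
\<close>

lemma exp_minus_one_mult_exp_minus_one:
  fixes a n s :: real
  shows "(exp (a * s) - 1) * (exp (n * s) - 1)
           = 4 * exp ((a + n) * s / 2) * (sinh (a * s / 2) * sinh (n * s / 2))"
proof -
  define u where "u = exp (a * s / 2)"
  define v where "v = exp (n * s / 2)"
  have exps: "exp (a * s) = u * u" "exp (n * s) = v * v" "exp ((a + n) * s / 2) = u * v"
    unfolding u_def v_def by (simp_all flip: exp_add add: field_simps)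
  have sinhs: "sinh (a * s / 2) = (u - 1 / u) / 2" "sinh (n * s / 2) = (v - 1 / v) / 2"
    unfolding u_def v_def sinh_field_def by (simp_all add: exp_minus inverse_eq_divide)
  have "u > 0" "v > 0"
    unfolding u_def v_def by simp_all
  then show ?thesis
    unfolding exps sinhs by (simp add: field_simps)
qed

lemma sinh_ge_self:
  fixes x :: real
  assumes "0 \<le> x"
  shows "x \<le> sinh x"
  using real_le_x_sinh[OF assms] by (simp add: sinh_field_def exp_minus)

lemma sinh_le_exp_half: "sinh (x :: real) \<le> exp x / 2"
  by (simp add: sinh_field_def)

lemma sinh_ge_exp_minus_one_half:
  fixes x :: real
  assumes "0 \<le> x"
  shows "(exp x - 1) / 2 \<le> sinh x"
  using assms by (simp add: sinh_field_def)

lemma sinh_le_mult_exp: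
  fixes x :: real
  assumes "0 \<le> x"
  shows "sinh x \<le> x * exp x"
proof -
  have "exp (- x) = exp x * exp (- (2 * x))"
    by (simp flip: exp_add)
  moreover have "1 - 2 * x \<le> exp (- (2 * x))"
    using exp_ge_add_one_self[of "- (2 * x)"] by simp
  ultimately have "exp x * (1 - 2 * x) \<le> exp (- x)"
    by simp
  then show ?thesis
    by (simp add: sinh_field_def algebra_simps)
qed

lemma powr_div_self_less_iff:
  fixes x y c :: real
  assumes "1 < x" "0 < y"
  shows "x powr (c / x) < y \<longleftrightarrow> c < x * ln y / ln x"
    and "y < x powr (c / x) \<longleftrightarrow> x * ln y / ln x < c"
proof -
  have pos: "0 < x" "0 < ln x" "0 < x powr (c / x)"
    using assms by simp_all
  have "x powr (c / x) < y \<longleftrightarrow> ln (x powr (c / x)) < ln y"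
    using assms pos by (intro ln_less_cancel_iff[symmetric])
  also have "\<dots> \<longleftrightarrow> c < x * ln y / ln x"
    using pos by (simp add: field_simps)
  finally show "x powr (c / x) < y \<longleftrightarrow> c < x * ln y / ln x" .
  have "y < x powr (c / x) \<longleftrightarrow> ln y < ln (x powr (c / x))"
    using assms pos by (intro ln_less_cancel_iff[symmetric])
  also have "\<dots> \<longleftrightarrow> x * ln y / ln x < c"
    using pos by (simp add: field_simps)
  finally show "y < x powr (c / x) \<longleftrightarrow> x * ln y / ln x < c" .
qed

definition sinh_product :: "nat \<Rightarrow> nat \<Rightarrow> real \<Rightarrow> real" where
  "sinh_product g p s = sinh (real (2 * g + 1) * s / 2) * sinh (real (2 * p + 1) * s / 2)"

lemma B_poly_exp:
  "B_poly g p (exp s) = 4 * exp (real (p + g + 1) * s) * (sinh_product g p s - 1 / 2)"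
proof -
  have "B_poly g p (exp s)
          = (exp (real (2 * g + 1) * s) - 1) * (exp (real (2 * p + 1) * s) - 1)
            - 2 * exp (real (p + g + 1) * s)"
    unfolding B_poly_def exp_of_nat_mult by (simp add: algebra_simps)
  moreover have "real (2 * g + 1) + real (2 * p + 1) = 2 * real (p + g + 1)"
    by simp
  ultimately show ?thesis
    unfolding exp_minus_one_mult_exp_minus_one sinh_product_def by (simp add: algebra_simps)
qed

lemma sinh_product_strict_mono_on: "strict_mono_on {0..} (sinh_product g p)"
proof (rule strict_mono_onI)
  fix s s' :: real
  assume "s \<in> {0..}" "s' \<in> {0..}" "s < s'"
  then show "sinh_product g p s < sinh_product g p s'"
    unfolding sinh_product_def
    by (intro mult_strict_mono) (auto simp: divide_strict_right_mono mult_strict_left_mono)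
qed

lemma r_root_eqI:
  assumes "0 < s" "sinh_product g p s = 1 / 2"
  shows "r_root g p = exp s"
  unfolding r_root_def
proof (rule the_equality)
  show "1 < exp s \<and> B_poly g p (exp s) = 0"
    using assms by (simp add: B_poly_exp)
next
  fix t
  assume t: "1 < t \<and> B_poly g p t = 0"
  then have "sinh_product g p (ln t) = 1 / 2"
    using B_poly_exp[of g p "ln t"] by simp
  moreover have "ln t \<in> {0..}" "s \<in> {0..}"
    using t assms by simp_all
  ultimately have "ln t = s"
    using strict_mono_on_eqD[OF sinh_product_strict_mono_on] assms(2) by metis
  then show "t = exp s"
    using t by auto
qed

lemma r_root_between:
  assumes "0 < s1" "s1 < s2"
    and "sinh_product g p s1 < 1 / 2" "1 / 2 < sinh_product g p s2"
  shows "exp s1 < r_root g p \<and> r_root g p < exp s2"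
proof -
  have "continuous_on {s1..s2} (sinh_product g p)"
    unfolding sinh_product_def by (intro continuous_intros) auto
  then obtain s where s: "s1 \<le> s" "s \<le> s2" "sinh_product g p s = 1 / 2"
    using IVT'[of "sinh_product g p" s1 "1 / 2" s2] assms by force
  then have "s1 < s" "s < s2"
    using assms by (auto simp: order.order_iff_strict)
  moreover have "r_root g p = exp s"
    using r_root_eqI s assms by simp
  ultimately show ?thesis
    by simp
qed

lemma sinh_product_le:
  assumes "0 \<le> s"
  shows "sinh_product g p s \<le> real (2 * g + 1) * s / 4 * exp (real (p + g + 1) * s)"
proof -
  define a where "a = real (2 * g + 1) * s / 2"
  define n where "n = real (2 * p + 1) * s / 2"
  have "0 \<le> a" "0 \<le> n"
    using assms by (simp_all add: a_def n_def)
  then have "sinh a * sinh n \<le> (a * exp a) * (exp n / 2)"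
    by (intro mult_mono sinh_le_mult_exp sinh_le_exp_half) auto
  also have "exp a * exp n = exp (real (p + g + 1) * s)"
    unfolding a_def n_def by (simp flip: exp_add add: field_simps)
  ultimately show ?thesis
    unfolding sinh_product_def a_def n_def by (simp add: algebra_simps)
qed

lemma sinh_product_ge:
  assumes "0 \<le> s"
  shows "real (2 * g + 1) * s / 4 * (exp (real p * s) - 1) \<le> sinh_product g p s"
proof -
  define a where "a = real (2 * g + 1) * s / 2"
  define n where "n = real (2 * p + 1) * s / 2"
  have "0 \<le> a" "real p * s \<le> n"
    using assms by (simp_all add: a_def n_def algebra_simps)
  then have "(exp (real p * s) - 1) / 2 \<le> (exp n - 1) / 2"
    by simp
  also have "\<dots> \<le> sinh n"
    using sinh_ge_exp_minus_one_half assms by (simp add: n_def)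
  finally have "(exp (real p * s) - 1) / 2 \<le> sinh n" .
  with \<open>0 \<le> a\<close> have "a * ((exp (real p * s) - 1) / 2) \<le> sinh a * sinh n"
    using assms by (intro mult_mono sinh_ge_self) auto
  then show ?thesis
    unfolding sinh_product_def a_def n_def by (simp add: algebra_simps)
qed

lemma sinh_product_less_half_eventually:
  assumes "0 < c" "c < 1"
  shows "\<forall>\<^sub>F p in sequentially. sinh_product g p (c * ln (real p) / real p) < 1 / 2"
proof -
  define f where "f p = real (2 * g + 1) * c / 4 * (ln (real p) / real p powr (1 - c))
                          * exp ((real g + 1) * c * (ln (real p) / real p))" for p
  have "(\<lambda>p. exp ((real g + 1) * c * (ln (real p) / real p))) \<longlonglongrightarrow> exp ((real g + 1) * c * 0)"
    by (intro tendsto_intros lim_ln_over_n)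
  then have "f \<longlonglongrightarrow> real (2 * g + 1) * c / 4 * 0 * exp ((real g + 1) * c * 0)"
    unfolding f_def using assms by (intro tendsto_intros lim_ln_over_power) simp
  then have "f \<longlonglongrightarrow> 0"
    by simp
  then have "\<forall>\<^sub>F p in sequentially. f p < 1 / 2"
    by (rule order_tendstoD) simp
  then show ?thesis
    using eventually_gt_at_top[of 0]
  proof eventually_elim
    case (elim p)
    define s where "s = c * ln (real p) / real p"
    define E where "E = exp ((real g + 1) * c * (ln (real p) / real p))"
    have "exp (real (p + g + 1) * s) = real p powr c * E"
      using elim by (simp add: s_def E_def powr_def field_simps flip: exp_add)
    then have "real (2 * g + 1) * s / 4 * exp (real (p + g + 1) * s)
                 = real (2 * g + 1) * c / 4 * (ln (real p) * (real p powr c / real p)) * E"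
      by (simp add: s_def)
    also have "ln (real p) * (real p powr c / real p) = ln (real p) / real p powr (1 - c)"
      using elim by (simp add: powr_diff)
    finally have "real (2 * g + 1) * s / 4 * exp (real (p + g + 1) * s) = f p"
      by (simp add: f_def E_def)
    moreover have "0 \<le> s"
      using elim assms by (simp add: s_def)
    ultimately show ?case
      using sinh_product_le[of s g p] elim by (simp add: s_def)
  qed
qed

lemma sinh_product_greater_half_eventually:
  assumes "1 < c"
  shows "\<forall>\<^sub>F p in sequentially. 1 / 2 < sinh_product g p (c * ln (real p) / real p)"
proof -
  have "\<forall>\<^sub>F p in sequentially. 4 < ln (real p)"
    using filterlim_compose[OF ln_at_top filterlim_real_sequentially]
    by (simp add: filterlim_at_top_dense)
  then show ?thesis
    using eventually_ge_at_top[of 2]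
  proof eventually_elim
    case (elim p)
    define s where "s = c * ln (real p) / real p"
    have "ln (real p) \<le> c * ln (real p)"
      using elim assms by (simp add: mult_le_cancel_right1)
    have "real p = exp (ln (real p))"
      using elim by simp
    also have "\<dots> \<le> exp (c * ln (real p))"
      using \<open>ln (real p) \<le> c * ln (real p)\<close> by simp
    also have "\<dots> = exp (real p * s)"
      using elim by (simp add: s_def)
    finally have exp_ge: "real p \<le> exp (real p * s)" .
    have "1 \<le> real (2 * g + 1) * c"
      using assms mult_mono[of 1 "real (2 * g + 1)" 1 c] by simp
    have "ln (real p) / 8 \<le> ln (real p) * (real p - 1) / (4 * real p)"
      using elim by (simp add: field_simps)
    also have "\<dots> \<le> (real (2 * g + 1) * c) * ln (real p) * (real p - 1) / (4 * real p)"
      using \<open>1 \<le> real (2 * g + 1) * c\<close> elim by (intro divide_right_mono mult_right_mono) auto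
    also have "\<dots> = real (2 * g + 1) * s / 4 * (real p - 1)"
      by (simp add: s_def)
    also have "\<dots> \<le> real (2 * g + 1) * s / 4 * (exp (real p * s) - 1)"
      using exp_ge elim assms by (intro mult_left_mono) (auto simp: s_def)
    finally have "ln (real p) / 8 \<le> real (2 * g + 1) * s / 4 * (exp (real p * s) - 1)" .
    moreover have "\<dots> \<le> sinh_product g p s"
      using elim assms by (intro sinh_product_ge) (simp add: s_def)
    ultimately show ?case
      unfolding s_def[symmetric] using elim(1) by linarith
  qed
qed

lemma r_root_powr_bounds:
  assumes "0 < c1" "c1 < 1" "1 < c2"
  shows "\<forall>\<^sub>F p in sequentially.
           real p powr (c1 / real p) < r_root g p \<and> r_root g p < real p powr (c2 / real p)"
  using sinh_product_less_half_eventually[OF assms(1,2), where g = g]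
    sinh_product_greater_half_eventually[OF assms(3), where g = g] eventually_ge_at_top[of 2]
proof eventually_elim
  case (elim p)
  have "0 < c1 * ln (real p) / real p" "c1 * ln (real p) / real p < c2 * ln (real p) / real p"
    using elim assms by (simp_all add: divide_strict_right_mono)
  then have "exp (c1 * ln (real p) / real p) < r_root g p \<and> r_root g p < exp (c2 * ln (real p) / real p)"
    using elim by (intro r_root_between) auto
  then show ?case
    using elim by (simp add: powr_def)
qed

lemma r_root_ln_ratio_bounds:
  assumes "0 < c1" "c1 < 1" "1 < c2"
  shows "\<forall>\<^sub>F p in sequentially. c1 < real p * ln (r_root g p) / ln (real p)
                                 \<and> real p * ln (r_root g p) / ln (real p) < c2"
  using r_root_powr_bounds[OF assms, where g = g] eventually_ge_at_top[of 2]
proof eventually_elim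
  case (elim p)
  then have "1 < real p" "0 < r_root g p"
    using order.strict_trans1[OF powr_ge_zero] by auto
  with elim show ?case
    by (simp add: powr_div_self_less_iff)
qed

theorem lemma4p1:
  fixes g :: nat
  shows "(\<forall>c1 c2 :: real. 0 < c1 \<and> c1 < 1 \<and> c2 > 1 \<longrightarrow>
            (\<forall>\<^sub>F p in sequentially.
               real p powr (c1 / real p) < r_root g p \<and>
               r_root g p < real p powr (c2 / real p)))
         \<and> ((\<lambda>p. real p * ln (r_root g p) / ln (real p)) \<longlonglongrightarrow> 1)"
proof
  show "\<forall>c1 c2 :: real. 0 < c1 \<and> c1 < 1 \<and> c2 > 1 \<longrightarrow>
          (\<forall>\<^sub>F p in sequentially.
             real p powr (c1 / real p) < r_root g p \<and> r_root g p < real p powr (c2 / real p))"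
    using r_root_powr_bounds by blast
  show "(\<lambda>p. real p * ln (r_root g p) / ln (real p)) \<longlonglongrightarrow> 1"
  proof (rule order_tendstoI)
    fix a :: real
    assume "a < 1"
    then have "\<forall>\<^sub>F p in sequentially. max a (1 / 2) < real p * ln (r_root g p) / ln (real p)
                                   \<and> real p * ln (r_root g p) / ln (real p) < 2"
      by (intro r_root_ln_ratio_bounds) auto
    then show "\<forall>\<^sub>F p in sequentially. a < real p * ln (r_root g p) / ln (real p)"
      by (rule eventually_mono) simp
  next
    fix a :: real
    assume "1 < a"
    then have "\<forall>\<^sub>F p in sequentially. 1 / 2 < real p * ln (r_root g p) / ln (real p)
                                   \<and> real p * ln (r_root g p) / ln (real p) < a"
      by (intro r_root_ln_ratio_bounds) auto
    then show "\<forall>\<^sub>F p in sequentially. real p * ln (r_root g p) / ln (real p) < a"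
      by (rule eventually_mono) simp
  qed
qed

end
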